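(* In the setting described in the context, every Casimir element $I_\ell$ ($\ell\in\mathbb{N}$) of $\mathfrak{gl}(U)\cong\mathfrak{gl}_{n|n}$ acts as zero on $\mathcal{V}_\lambda$: $\rho_*(I_\ell)=0$.
   Context: Let $p,q,N\ge1$, $n=p+q$. Let $U=U_1\oplus U_0$ with $U_1=U_1^+\oplus U_1^-$, $U_0=U_0^+\oplus U_0^-$, $U_\tau^+=\mathbb{C}^p$, $U_\tau^-=\mathbb{C}^q$ ($U_1$ odd, $U_0$ even), and $V=U\otimes\mathbb{C}^N$ with $V_\tau^\pm=U_\tau^\pm\otimes\mathbb{C}^N$. Let $\mathcal{A}_V=\wedge(V_1^+\oplus{V_1^-}^* )\otimes \mathrm{S}(V_0^+\oplus{V_0^-}^* )$ (parity = exterior degree mod 2). Let $\varepsilon,\iota$ denote exterior multiplication and contraction, $\mu,\delta$ symmetric multiplication and derivation. The Clifford–Weyl algebra $\mathfrak{q}(V\oplus V^* )$ (generated by $W=V\oplus V^*$ with $ww'-(-1)^{|w||w'|}w'w=Q(w,w')$, where $Q(v+\varphi,v'+\varphi')=\varphi(v')+\varphi'(v)$ on $V_1\oplus V_1^*$, $=\varphi(v')-\varphi'(v)$ on $V_0\oplus V_0^*$, and the two are orthogonal) acts on $\mathcal{A}_V$ by: $v\in V_1^+\mapsto\varepsilon(v)$, $\varphi\in{V_1^+}^*\mapsto\iota(\varphi)$, $v\in V_1^-\mapsto\iota(v)$, $\varphi\in{V_1^-}^*\mapsto\varepsilon(\varphi)$, $v\in V_0^+\mapsto\mu(v)$, $\varphi\in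 {V_0^+}^*\mapsto\delta(\varphi)$, $v\in V_0^-\mapsto\delta(v)$, $\varphi\in{V_0^-}^*\mapsto-\mu(\varphi)$. Composing with $X\mapsto\sum_i(Xe_i)f^i$ (homogeneous basis $e_i$ of $V$, dual basis $f^i$) gives a representation $R_*$ of $\mathfrak{gl}(V)$ on $\mathcal{A}_V$, and $\rho_*(X):=R_*(X\otimes\mathrm{Id}_N)$ for $X\in\mathfrak{gl}(U)$. $\mathrm{U}_N$ acts on $\mathcal{A}_V$ through its natural action on $V_\tau^+$ (by $\mathrm{Id}\otimes u$) and on ${V_\tau^-}^*$ (contragredient), extended to the exterior and symmetric algebras; $\mathcal{V}_\lambda\subset\mathcal{A}_V$ is the subspace of $\mathrm{U}_N$-invariant vectors, which is preserved by $\rho_*$. $I_\ell$ is the Casimir element of $\mathfrak{gl}_{n|n}$: with a standard basis $E^{\sigma\tau}_{ij}$ ($\sigma,\tau\in\{0,1\}$, $\sigma=1$ for $U_1$, $\sigma=0$ for $U_0$, $E^{\sigma\tau}_{ij}E^{\sigma'\tau'}_{i'j'}=\delta^{\tau\sigma'}\delta_{ji'}E^{\sigma\tau'}_{ij'}$), $I_\ell=\sum E^{\sigma_1\sigma_2}_{j_1j_2}(-1)^{\sigma_2}E^{\sigma_2\sigma_3}_{j_2j_3}(-1)^{\sigma_3}\cdots(-1)^{\sigma_\ell}E^{\sigma_\ell\sigma_1}_{j_\ell j_1}$, and $\rho_*$ is extended to the universal enveloping algebra. *)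

theory Defs
  imports Complex_Main "HOL-Library.Product_Lexorder" "HOL-Library.FuncSet"
begin

text \<open>Generator indices (s, i, k): s = True for the "+" part, s = False for the "-" part;
  i indexes U^+ = C^p (i < p) resp. U^- = C^q (i < q); k < N indexes C^N.
  The same index set labels the odd generators of A_V (basis of V_1^+ resp. (V_1^-)^* )
  and the even generators (basis of V_0^+ resp. (V_0^-)^* ).\<close>

type_synonym gix = "bool \<times> nat \<times> nat"

text \<open>A monomial of A_V: a set S of odd generators (the wedge product of them in
  increasing order) and an exponent function m of the even generators.\<close>

type_synonym mono = "gix set \<times> (gix \<Rightarrow> nat)"
type_synonym fock = "mono \<Rightarrow> complex"

definition valid_ix :: "nat \<Rightarrow> nat \<Rightarrow> nat \<Rightarrow> gix \<Rightarrow> bool" where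
  "valid_ix p q N a = (case a of (s, i, k) \<Rightarrow> k < N \<and> (if s then i < p else i < q))"

definition valid_mono :: "nat \<Rightarrow> nat \<Rightarrow> nat \<Rightarrow> mono \<Rightarrow> bool" where
  "valid_mono p q N M = (case M of (S, m) \<Rightarrow>
      S \<subseteq> {a. valid_ix p q N a} \<and> (\<forall>b. \<not> valid_ix p q N b \<longrightarrow> m b = 0))"

definition A_V :: "nat \<Rightarrow> nat \<Rightarrow> nat \<Rightarrow> fock set" where
  "A_V p q N = {f. finite {M. f M \<noteq> 0} \<and> (\<forall>M. f M \<noteq> 0 \<longrightarrow> valid_mono p q N M)}"

definition vac :: fock where
  "vac = (\<lambda>M. if M = ({}, (\<lambda>_. 0)) then 1 else 0)"

definition ext_sign :: "gix set \<Rightarrow> gix \<Rightarrow> complex" where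
  "ext_sign S a = (-1) ^ card {b \<in> S. b < a}"

definition eps :: "gix \<Rightarrow> fock \<Rightarrow> fock" where
  "eps a f = (\<lambda>(S, m). if a \<in> S then ext_sign S a * f (S - {a}, m) else 0)"

definition iota :: "gix \<Rightarrow> fock \<Rightarrow> fock" where
  "iota a f = (\<lambda>(S, m). if a \<notin> S then ext_sign S a * f (insert a S, m) else 0)"

definition mu :: "gix \<Rightarrow> fock \<Rightarrow> fock" where
  "mu b f = (\<lambda>(S, m). if 0 < m b then f (S, m(b := m b - 1)) else 0)"

definition dlt :: "gix \<Rightarrow> fock \<Rightarrow> fock" where
  "dlt b f = (\<lambda>(S, m). of_nat (m b + 1) * f (S, m(b := m b + 1)))"

text \<open>Clifford--Weyl action of the basis vectors e_{sigma,s,i,k} of V and of the dual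
  basis vectors f^{sigma,s,i,k} of V^*; sigma = 1 for V_1 (odd), sigma = 0 for V_0 (even).\<close>
definition q_e :: "nat \<Rightarrow> bool \<Rightarrow> nat \<Rightarrow> nat \<Rightarrow> fock \<Rightarrow> fock" where
  "q_e \<sigma> s i k f =
     (if \<sigma> = 1 then (if s then eps (s, i, k) f else iota (s, i, k) f)
      else (if s then mu (s, i, k) f else dlt (s, i, k) f))"

definition q_f :: "nat \<Rightarrow> bool \<Rightarrow> nat \<Rightarrow> nat \<Rightarrow> fock \<Rightarrow> fock" where
  "q_f \<sigma> s i k f =
     (if \<sigma> = 1 then (if s then iota (s, i, k) f else eps (s, i, k) f)
      else (if s then dlt (s, i, k) f else (\<lambda>M. - mu (s, i, k) f M)))"

definition uix :: "nat \<Rightarrow> nat \<Rightarrow> bool \<times> nat" where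
  "uix p j = (if j < p then (True, j) else (False, j - p))"

text \<open>rho_*(E^{sigma tau}_{ij}) = R_*(E^{sigma tau}_{ij} (x) Id_N)
   = sum_k q(e_{sigma,i,k}) q(f^{tau,j,k}).\<close>
definition rhoE :: "nat \<Rightarrow> nat \<Rightarrow> nat \<Rightarrow> nat \<Rightarrow> nat \<Rightarrow> nat \<Rightarrow> fock \<Rightarrow> fock" where
  "rhoE p N \<sigma> \<tau> i j f =
     (\<lambda>M. \<Sum>k<N. q_e \<sigma> (fst (uix p i)) (snd (uix p i)) k
                    (q_f \<tau> (fst (uix p j)) (snd (uix p j)) k f) M)"

text \<open>The r-th factor (r < l) of a summand of I_l; c r = (sigma_{r+1}, j_{r+1}).\<close>
definition cas_factor :: "nat \<Rightarrow> nat \<Rightarrow> nat \<Rightarrow> (nat \<Rightarrow> nat \<times> nat) \<Rightarrow> nat \<Rightarrow> fock \<Rightarrow> fock" where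
  "cas_factor p N l c r f =
     (\<lambda>M. (if r = 0 then 1 else (-1) ^ fst (c r)) *
           rhoE p N (fst (c r)) (fst (c ((r + 1) mod l))) (snd (c r)) (snd (c ((r + 1) mod l))) f M)"

definition casimir_op :: "nat \<Rightarrow> nat \<Rightarrow> nat \<Rightarrow> nat \<Rightarrow> fock \<Rightarrow> fock" where
  "casimir_op p q N l f =
     (\<lambda>M. \<Sum>c \<in> Pi\<^sub>E {..<l} (\<lambda>_. {0, 1} \<times> {..<p + q}).
            foldr (\<circ>) (map (cas_factor p N l c) [0..<l]) id f M)"

definition unitary_mat :: "nat \<Rightarrow> (nat \<Rightarrow> nat \<Rightarrow> complex) \<Rightarrow> bool" where
  "unitary_mat N u = (\<forall>i<N. \<forall>j<N. (\<Sum>k<N. cnj (u k i) * u k j) = (if i = j then 1 else 0))"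

text \<open>Coefficient of the generator (s,i,k') in the image of generator (s,i,k) under u:
  natural action on V^+ (by Id (x) u), contragredient action on (V^-)^*.\<close>
definition ucoef :: "(nat \<Rightarrow> nat \<Rightarrow> complex) \<Rightarrow> bool \<Rightarrow> nat \<Rightarrow> nat \<Rightarrow> complex" where
  "ucoef u s k' k = (if s then u k' k else cnj (u k' k))"

definition eps_u :: "nat \<Rightarrow> (nat \<Rightarrow> nat \<Rightarrow> complex) \<Rightarrow> gix \<Rightarrow> fock \<Rightarrow> fock" where
  "eps_u N u a f = (case a of (s, i, k) \<Rightarrow>
      (\<lambda>M. \<Sum>k'<N. ucoef u s k' k * eps (s, i, k') f M))"

definition mu_u :: "nat \<Rightarrow> (nat \<Rightarrow> nat \<Rightarrow> complex) \<Rightarrow> gix \<Rightarrow> fock \<Rightarrow> fock" where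
  "mu_u N u b f = (case b of (s, i, k) \<Rightarrow>
      (\<lambda>M. \<Sum>k'<N. ucoef u s k' k * mu (s, i, k') f M))"

definition act_mono :: "nat \<Rightarrow> nat \<Rightarrow> nat \<Rightarrow> (nat \<Rightarrow> nat \<Rightarrow> complex) \<Rightarrow> mono \<Rightarrow> fock" where
  "act_mono p q N u M = (case M of (S, m) \<Rightarrow>
      foldr (\<lambda>a g. eps_u N u a \<circ> g) (sorted_list_of_set S)
        (foldr (\<lambda>b g. (mu_u N u b ^^ m b) \<circ> g)
           (sorted_list_of_set {b. valid_ix p q N b \<and> 0 < m b}) id) vac)"

definition UN_act :: "nat \<Rightarrow> nat \<Rightarrow> nat \<Rightarrow> (nat \<Rightarrow> nat \<Rightarrow> complex) \<Rightarrow> fock \<Rightarrow> fock" where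
  "UN_act p q N u f = (\<lambda>M. \<Sum>M0 \<in> {M0. f M0 \<noteq> 0}. f M0 * act_mono p q N u M0 M)"

definition V_lambda :: "nat \<Rightarrow> nat \<Rightarrow> nat \<Rightarrow> fock set" where
  "V_lambda p q N = {f \<in> A_V p q N. \<forall>u. unitary_mat N u \<longrightarrow> UN_act p q N u f = f}"

end

theory Submission
  imports Defs "HOL-Analysis.Derivative"
begin

(* Differentiating U_N-invariance along the
   one-parameter subgroups exp (t Y) of U_N shows that f \<in> V_lambda is killed by the operators
   R_*(Id_U \<otimes> E_kk') generating the gl_N-action. Together with the canonical (anti)commutation
   relations this yields the contraction
     \<Sum>_x (-1)^|x| \<rho>(E_bx) \<rho>(E_xc) f = -N \<rho>(E_bc) f,
   which, applied inside the cyclic products defining the Casimir elements, gives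
   I_(l+1) f = -N I_l f. Finally I_1 f = \<Sum>_k R_*(Id_U \<otimes> E_kk) f = 0. *)

text \<open>ext_sign counts with card, which is 0 on infinite sets, so the anticommutation relations
  only hold on functions vanishing on monomials with infinite wedge part, as elements of A_V do.\<close>

definition finite_wedge_supp :: "fock \<Rightarrow> bool" where
  "finite_wedge_supp g \<longleftrightarrow> (\<forall>S m. infinite S \<longrightarrow> g (S, m) = 0)"

lemma eps_apply: "eps a g (S, m) = (if a \<in> S then ext_sign S a * g (S - {a}, m) else 0)"
  by (simp add: eps_def)
lemma iota_apply: "iota a g (S, m) = (if a \<notin> S then ext_sign S a * g (insert a S, m) else 0)"
  by (simp add: iota_def)
lemma mu_apply: "mu b g (S, m) = (if 0 < m b then g (S, m(b := m b - 1)) else 0)"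
  by (simp add: mu_def)
lemma dlt_apply: "dlt b g (S, m) = of_nat (m b + 1) * g (S, m(b := m b + 1))"
  by (simp add: dlt_def)

lemma ext_sign_insert:
  assumes "finite S" "a \<notin> S" "a \<noteq> b"
  shows "ext_sign (insert a S) b = (if a < b then - ext_sign S b else ext_sign S b)"
proof (cases "a < b")
  case True
  have "{c \<in> insert a S. c < b} = insert a {c \<in> S. c < b}" using True by auto
  moreover have "card (insert a {c \<in> S. c < b}) = Suc (card {c \<in> S. c < b})"
    using assms by simp
  ultimately show ?thesis using True by (simp add: ext_sign_def)
next
  case False
  have "{c \<in> insert a S. c < b} = {c \<in> S. c < b}" using False by auto
  then show ?thesis using False by (simp add: ext_sign_def)
qed

lemma ext_sign_remove:
  assumes "finite S" "a \<in> S" "a \<noteq> b"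
  shows "ext_sign (S - {a}) b = (if a < b then - ext_sign S b else ext_sign S b)"
proof -
  have "ext_sign (insert a (S - {a})) b = (if a < b then - ext_sign (S - {a}) b else ext_sign (S - {a}) b)"
    using assms by (intro ext_sign_insert) auto
  moreover have "insert a (S - {a}) = S" using assms by auto
  ultimately show ?thesis by auto
qed

lemma ext_sign_insert_self: "ext_sign (insert a S) a = ext_sign S a"
proof -
  have "{c \<in> insert a S. c < a} = {c \<in> S. c < a}" by auto
  then show ?thesis by (simp add: ext_sign_def)
qed

lemma ext_sign_remove_self: "ext_sign (S - {a}) a = ext_sign S a"
proof -
  have "{c \<in> S - {a}. c < a} = {c \<in> S. c < a}" by auto
  then show ?thesis by (simp add: ext_sign_def)
qed

lemma ext_sign_square: "ext_sign S a * ext_sign S a = 1"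
  by (simp add: ext_sign_def power_mult_distrib[symmetric] flip: power_add)

lemma finite_wedge_supp_eps: "finite_wedge_supp g \<Longrightarrow> finite_wedge_supp (eps a g)"
  by (auto simp: finite_wedge_supp_def eps_apply)
lemma finite_wedge_supp_iota: "finite_wedge_supp g \<Longrightarrow> finite_wedge_supp (iota a g)"
  by (auto simp: finite_wedge_supp_def iota_apply)
lemma finite_wedge_supp_mu: "finite_wedge_supp g \<Longrightarrow> finite_wedge_supp (mu a g)"
  by (auto simp: finite_wedge_supp_def mu_apply)
lemma finite_wedge_supp_dlt: "finite_wedge_supp g \<Longrightarrow> finite_wedge_supp (dlt a g)"
  by (auto simp: finite_wedge_supp_def dlt_apply)

lemma eps_anticomm:
  assumes "finite_wedge_supp g"
  shows "eps a (eps b g) (S, m) = - eps b (eps a g) (S, m)"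
proof (cases "finite S")
  case False
  then show ?thesis using assms by (auto simp: eps_apply finite_wedge_supp_def)
next
  case True
  consider "a = b" | "a < b" | "b < a" using less_linear by blast
  then show ?thesis
  proof cases
    case 1 then show ?thesis by (simp add: eps_apply)
  next
    case 2
    then show ?thesis using True
      by (auto simp: eps_apply ext_sign_remove Diff_insert2[symmetric] insert_commute)
  next
    case 3
    then show ?thesis using True
      by (auto simp: eps_apply ext_sign_remove) (metis Diff_insert Diff_insert2)
  qed
qed

lemma iota_anticomm:
  assumes "finite_wedge_supp g"
  shows "iota a (iota b g) (S, m) = - iota b (iota a g) (S, m)"
proof (cases "finite S")
  case False
  then show ?thesis using assms by (auto simp: iota_apply finite_wedge_supp_def)
next
  case fin: True
  show ?thesis
  proof (cases "a = b")
    case True then show ?thesis by (simp add: iota_apply)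
  next
    case False
    have "insert b (insert a S) = insert a (insert b S)" by auto
    then show ?thesis using fin False by (auto simp: iota_apply ext_sign_insert)
  qed
qed

lemma iota_eps_anticomm:
  assumes "finite_wedge_supp g"
  shows "iota a (eps b g) (S, m) = (if a = b then g (S, m) else 0) - eps b (iota a g) (S, m)"
proof (cases "finite S")
  case False
  then show ?thesis using assms by (auto simp: iota_apply eps_apply finite_wedge_supp_def)
next
  case fin: True
  show ?thesis
  proof (cases "a = b")
    case True
    show ?thesis
    proof (cases "a \<in> S")
      case True
      then have "insert a (S - {a}) = S" by auto
      then show ?thesis using \<open>a = b\<close> True ext_sign_square[of S a]
        by (simp add: iota_apply eps_apply ext_sign_remove_self)
    next
      case False
      then have "insert a S - {a} = S" by auto
      then show ?thesis using \<open>a = b\<close> False ext_sign_square[of S a]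
        by (simp add: iota_apply eps_apply ext_sign_insert_self)
    qed
  next
    case False
    show ?thesis
    proof (cases "a \<in> S \<or> b \<notin> S")
      case True
      then show ?thesis using False by (auto simp: iota_apply eps_apply)
    next
      case outside: False
      have "insert a S - {b} = insert a (S - {b})" using False by auto
      then show ?thesis using fin False outside
        by (simp add: iota_apply eps_apply ext_sign_insert ext_sign_remove not_less_iff_gr_or_eq)
    qed
  qed
qed

lemma mu_comm: "mu a (mu b g) (S, m) = mu b (mu a g) (S, m)"
  by (cases "a = b") (auto simp: mu_apply fun_upd_twist)

lemma dlt_comm: "dlt a (dlt b g) (S, m) = dlt b (dlt a g) (S, m)"
  by (cases "a = b") (auto simp: dlt_apply fun_upd_twist)

lemma dlt_mu_comm: "dlt a (mu b g) (S, m) = (if a = b then g (S, m) else 0) + mu b (dlt a g) (S, m)"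
proof (cases "a = b")
  case True
  show ?thesis
  proof (cases "m b = 0")
    case True
    then have "m(b := 0) = m" by auto
    then show ?thesis using \<open>a = b\<close> True by (simp add: mu_apply dlt_apply)
  next
    case False
    then have "m(b := m b - 1 + 1) = m" by auto
    then show ?thesis using \<open>a = b\<close> False by (simp add: mu_apply dlt_apply algebra_simps of_nat_diff)
  qed
next
  case False
  then show ?thesis by (auto simp: mu_apply dlt_apply fun_upd_twist)
qed

lemma eps_mu_comm: "eps a (mu b g) (S, m) = mu b (eps a g) (S, m)"
  by (auto simp: mu_apply eps_apply)
lemma eps_dlt_comm: "eps a (dlt b g) (S, m) = dlt b (eps a g) (S, m)"
  by (auto simp: dlt_apply eps_apply)
lemma iota_mu_comm: "iota a (mu b g) (S, m) = mu b (iota a g) (S, m)"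
  by (auto simp: mu_apply iota_apply)
lemma iota_dlt_comm: "iota a (dlt b g) (S, m) = dlt b (iota a g) (S, m)"
  by (auto simp: dlt_apply iota_apply)

definition lin_op :: "(fock \<Rightarrow> fock) \<Rightarrow> bool" where
  "lin_op L \<longleftrightarrow> (\<forall>g h. L (\<lambda>M. g M + h M) = (\<lambda>M. L g M + L h M)) \<and>
     (\<forall>c g. L (\<lambda>M. c * g M) = (\<lambda>M. c * L g M))"

lemma lin_op_eps: "lin_op (eps a)"
  unfolding lin_op_def by (auto intro!: ext simp: eps_def algebra_simps split: prod.splits)
lemma lin_op_iota: "lin_op (iota a)"
  unfolding lin_op_def by (auto intro!: ext simp: iota_def algebra_simps split: prod.splits)
lemma lin_op_mu: "lin_op (mu a)"
  unfolding lin_op_def by (auto intro!: ext simp: mu_def algebra_simps split: prod.splits)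
lemma lin_op_dlt: "lin_op (dlt a)"
  unfolding lin_op_def by (auto intro!: ext simp: dlt_def algebra_simps split: prod.splits)

lemma lin_op_add: "lin_op L \<Longrightarrow> L (\<lambda>M. g M + h M) M = L g M + L h M"
  unfolding lin_op_def by metis
lemma lin_op_scale: "lin_op L \<Longrightarrow> L (\<lambda>M. c * g M) M = c * L g M"
  unfolding lin_op_def by metis
lemma lin_op_zero: "lin_op L \<Longrightarrow> L (\<lambda>M. 0) M = 0"
  using lin_op_scale[of L 0 "\<lambda>M. 0" M] by simp
lemma lin_op_neg: "lin_op L \<Longrightarrow> L (\<lambda>M. - g M) M = - L g M"
  using lin_op_scale[of L "-1" g M] by simp

lemma lin_op_sum:
  assumes "lin_op L" "finite I"
  shows "L (\<lambda>M. \<Sum>i\<in>I. G i M) M = (\<Sum>i\<in>I. L (G i) M)"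
  using assms(2)
proof (induction I arbitrary: M rule: finite_induct)
  case empty then show ?case using lin_op_zero[OF assms(1)] by simp
next
  case (insert x F)
  then show ?case using lin_op_add[OF assms(1), of "G x" "\<lambda>M. \<Sum>i\<in>F. G i M" M] by simp
qed

lemma lin_op_comp: "lin_op L1 \<Longrightarrow> lin_op L2 \<Longrightarrow> lin_op (L1 \<circ> L2)"
  unfolding lin_op_def by simp
lemma lin_op_id: "lin_op id"
  unfolding lin_op_def by simp
lemma lin_op_cmult: "lin_op L \<Longrightarrow> lin_op (\<lambda>g M. c * L g M)"
  unfolding lin_op_def by (simp add: algebra_simps)

lemma lin_op_sum_ops:
  assumes "finite I" "\<And>i. i \<in> I \<Longrightarrow> lin_op (L i)"
  shows "lin_op (\<lambda>g M. \<Sum>i\<in>I. L i g M)"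
  unfolding lin_op_def
  using lin_op_add[OF assms(2)] lin_op_scale[OF assms(2)]
  by (simp add: sum.distrib sum_distrib_left)

definition gen_op :: "nat \<Rightarrow> bool \<Rightarrow> gix \<Rightarrow> fock \<Rightarrow> fock" where
  "gen_op \<sigma> c a = (if \<sigma> = 1 then (if c then eps a else iota a) else (if c then mu a else dlt a))"

lemma lin_op_gen_op: "lin_op (gen_op \<sigma> c a)"
  by (simp add: gen_op_def lin_op_eps lin_op_iota lin_op_mu lin_op_dlt)

lemma finite_wedge_supp_gen_op: "finite_wedge_supp g \<Longrightarrow> finite_wedge_supp (gen_op \<sigma> c a g)"
  by (simp add: gen_op_def finite_wedge_supp_eps finite_wedge_supp_iota finite_wedge_supp_mu
      finite_wedge_supp_dlt)

lemma gen_op_comm: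
  assumes g: "finite_wedge_supp g" and s: "\<sigma> \<in> {0, 1}" "\<tau> \<in> {0, 1}"
  shows "gen_op \<sigma> c a (gen_op \<tau> d b g) M = (-1) ^ (\<sigma> * \<tau>) * gen_op \<tau> d b (gen_op \<sigma> c a g) M +
    (if \<sigma> = \<tau> \<and> a = b \<and> c \<noteq> d then (if \<sigma> = 1 then 1 else if c then -1 else 1) * g M else 0)"
proof -
  obtain S m where M: "M = (S, m)" by (cases M)
  show ?thesis
    using s eps_anticomm[OF g, of a b S m] iota_anticomm[OF g, of a b S m]
      iota_eps_anticomm[OF g, of a b S m] iota_eps_anticomm[OF g, of b a S m]
      mu_comm[of a b g S m] dlt_comm[of a b g S m] dlt_mu_comm[of a b g S m] dlt_mu_comm[of b a g S m]
      eps_mu_comm[of a b g S m] eps_dlt_comm[of a b g S m] iota_mu_comm[of a b g S m]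
      iota_dlt_comm[of a b g S m] eps_mu_comm[of b a g S m] eps_dlt_comm[of b a g S m]
      iota_mu_comm[of b a g S m] iota_dlt_comm[of b a g S m]
    unfolding M by (cases c; cases d) (auto simp: gen_op_def)
qed

definition cw_e :: "nat \<Rightarrow> nat \<times> nat \<Rightarrow> nat \<Rightarrow> fock \<Rightarrow> fock" where
  "cw_e p x k = q_e (fst x) (fst (uix p (snd x))) (snd (uix p (snd x))) k"
definition cw_f :: "nat \<Rightarrow> nat \<times> nat \<Rightarrow> nat \<Rightarrow> fock \<Rightarrow> fock" where
  "cw_f p x k = q_f (fst x) (fst (uix p (snd x))) (snd (uix p (snd x))) k"

definition U_basis :: "nat \<Rightarrow> (nat \<times> nat) set" where
  "U_basis n = {0, 1} \<times> {..<n}"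

definition U_gen :: "nat \<Rightarrow> nat \<times> nat \<Rightarrow> nat \<Rightarrow> gix" where
  "U_gen p x k = (fst (uix p (snd x)), snd (uix p (snd x)), k)"

definition cw_f_sign :: "nat \<Rightarrow> nat \<times> nat \<Rightarrow> complex" where
  "cw_f_sign p x = (if fst x \<noteq> 1 \<and> \<not> fst (uix p (snd x)) then -1 else 1)"

lemma U_gen_eq_iff: "U_gen p x k = U_gen p y k' \<longleftrightarrow> snd x = snd y \<and> k = k'"
  by (auto simp: U_gen_def uix_def prod_eq_iff split: if_splits)

lemma cw_e_gen_op: "cw_e p x k = gen_op (fst x) (fst (U_gen p x k)) (U_gen p x k)"
  by (simp add: cw_e_def q_e_def gen_op_def U_gen_def fun_eq_iff)

lemma cw_f_gen_op:
  "cw_f p x k g = (\<lambda>M. cw_f_sign p x * gen_op (fst x) (\<not> fst (U_gen p x k)) (U_gen p x k) g M)"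
  by (auto simp: cw_f_def q_f_def gen_op_def U_gen_def cw_f_sign_def)

lemma lin_op_cw_e: "lin_op (cw_e p x k)"
  by (simp add: cw_e_gen_op lin_op_gen_op)
lemma lin_op_cw_f: "lin_op (cw_f p x k)"
  using lin_op_cmult[OF lin_op_gen_op] by (simp add: cw_f_gen_op[abs_def])
lemma finite_wedge_supp_cw_f: "finite_wedge_supp g \<Longrightarrow> finite_wedge_supp (cw_f p x k g)"
  using finite_wedge_supp_gen_op unfolding cw_f_gen_op finite_wedge_supp_def by auto

lemma neg_one_power_square: "((-1::complex) ^ n) * (-1) ^ n = 1"
  by (simp flip: power_add)

lemma cw_f_cw_e_comm:
  assumes g: "finite_wedge_supp g" and x: "fst x \<in> {0, 1}" and y: "fst y \<in> {0, 1}"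
  shows "cw_f p y k' (cw_e p x k g) M = (-1) ^ (fst x * fst y) * cw_e p x k (cw_f p y k' g) M +
     (if x = y \<and> k = k' then g M else 0)"
proof -
  have "x = y \<and> k = k' \<longleftrightarrow> fst y = fst x \<and> U_gen p y k' = U_gen p x k"
    unfolding U_gen_eq_iff by (auto simp: prod_eq_iff)
  moreover have "U_gen p y k' = U_gen p x k \<Longrightarrow> cw_f_sign p y * (if fst y = 1 then 1
      else if \<not> fst (U_gen p y k') then -1 else 1) = 1"
    by (auto simp: cw_f_sign_def U_gen_def)
  ultimately show ?thesis
    using gen_op_comm[OF g y x, of "\<not> fst (U_gen p y k')" "U_gen p y k'" "fst (U_gen p x k)" "U_gen p x k" M]
    by (auto simp: cw_e_gen_op cw_f_gen_op lin_op_scale[OF lin_op_gen_op] distrib_left mult.commute)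
qed

lemma cw_f_cw_f_comm:
  assumes g: "finite_wedge_supp g" and x: "fst x \<in> {0, 1}" and y: "fst y \<in> {0, 1}"
  shows "cw_f p y k' (cw_f p x k g) M = (-1) ^ (fst x * fst y) * cw_f p x k (cw_f p y k' g) M"
  using gen_op_comm[OF g y x, of "\<not> fst (U_gen p y k')" "U_gen p y k'" "\<not> fst (U_gen p x k)" "U_gen p x k" M]
  by (auto simp: cw_f_gen_op lin_op_scale[OF lin_op_gen_op] mult.commute mult.left_commute)

lemma cw_e_cw_e_comm:
  assumes g: "finite_wedge_supp g" and x: "fst x \<in> {0, 1}" and y: "fst y \<in> {0, 1}"
  shows "cw_e p y k' (cw_e p x k g) M = (-1) ^ (fst x * fst y) * cw_e p x k (cw_e p y k' g) M"
  using gen_op_comm[OF g y x, of "fst (U_gen p y k')" "U_gen p y k'" "fst (U_gen p x k)" "U_gen p x k" M]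
  by (auto simp: cw_e_gen_op mult.commute)

definition glN_op :: "nat \<Rightarrow> nat \<Rightarrow> nat \<Rightarrow> nat \<Rightarrow> fock \<Rightarrow> fock" where
  "glN_op p n k k' g = (\<lambda>M. \<Sum>x\<in>U_basis n. cw_e p x k (cw_f p x k' g) M)"

lemma finite_U_basis: "finite (U_basis n)" by (simp add: U_basis_def)
lemma U_basis_fst: "x \<in> U_basis n \<Longrightarrow> fst x \<in> {0, 1}" by (auto simp: U_basis_def)

lemma sum_U_basis_sign: "(\<Sum>x\<in>U_basis n. (-1) ^ fst x * (c (snd x) :: complex)) = 0"
proof -
  have "(\<Sum>x\<in>U_basis n. (-1) ^ fst x * c (snd x)) = (\<Sum>s\<in>{0::nat, 1}. \<Sum>j\<in>{..<n}. (-1) ^ s * c j)"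
    unfolding U_basis_def sum.cartesian_product by (rule sum.cong) auto
  also have "\<dots> = 0" by (simp add: sum_negf)
  finally show ?thesis .
qed

lemma sum_U_basis_cw_f_cw_e:
  assumes g: "finite_wedge_supp g"
  shows "(\<Sum>x\<in>U_basis n. (-1) ^ fst x * cw_f p x k' (cw_e p x k g) M) = glN_op p n k k' g M"
proof -
  have "(\<Sum>x\<in>U_basis n. (-1) ^ fst x * cw_f p x k' (cw_e p x k g) M) =
     (\<Sum>x\<in>U_basis n. cw_e p x k (cw_f p x k' g) M + (-1) ^ fst x * (if k = k' then g M else 0))"
  proof (rule sum.cong[OF refl])
    fix x assume x: "x \<in> U_basis n"
    then have f: "fst x \<in> {0, 1}" by (rule U_basis_fst)
    have e: "(-1::complex) ^ fst x * (-1) ^ (fst x * fst x) = 1" using f by auto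
    show "(-1) ^ fst x * cw_f p x k' (cw_e p x k g) M = cw_e p x k (cw_f p x k' g) M + (-1) ^ fst x * (if k = k' then g M else 0)"
      unfolding cw_f_cw_e_comm[OF g f f] using e by (simp add: algebra_simps)
  qed
  also have "\<dots> = glN_op p n k k' g M"
    by (simp add: sum.distrib sum_U_basis_sign[where c = "\<lambda>_. if k = k' then g M else 0"] glN_op_def)
  finally show ?thesis .
qed

lemma neg_one_power_comm: "a \<in> {0,1} \<Longrightarrow> b \<in> {0,1} \<Longrightarrow> ((-1::complex) ^ (a * b)) * (-1) ^ (b * a) = 1"
  by auto

lemma glN_op_cw_f_comm:
  assumes g: "finite_wedge_supp g" and c: "c \<in> U_basis n"
  shows "glN_op p n k k' (cw_f p c j g) M = cw_f p c j (glN_op p n k k' g) M - (if k = j then cw_f p c k' g M else 0)"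
proof -
  have fc: "fst c \<in> {0,1}" using c by (rule U_basis_fst)
  have "glN_op p n k k' (cw_f p c j g) M = (\<Sum>x\<in>U_basis n. cw_f p c j (cw_e p x k (cw_f p x k' g)) M -
      (if x = c then (if k = j then cw_f p c k' g M else 0) else 0))"
    unfolding glN_op_def
  proof (rule sum.cong[OF refl])
    fix x assume x: "x \<in> U_basis n"
    have fx: "fst x \<in> {0,1}" using x by (rule U_basis_fst)
    define h where "h = cw_f p x k' g"
    have gh: "finite_wedge_supp h" unfolding h_def by (rule finite_wedge_supp_cw_f[OF g])
    have e1: "cw_f p x k' (cw_f p c j g) = (\<lambda>M. (-1) ^ (fst c * fst x) * cw_f p c j h M)"
      unfolding h_def by (rule ext) (rule cw_f_cw_f_comm[OF g fc fx])
    have e2: "cw_f p c j (cw_e p x k h) M = (-1) ^ (fst x * fst c) * cw_e p x k (cw_f p c j h) M +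
       (if x = c \<and> k = j then h M else 0)"
      by (rule cw_f_cw_e_comm[OF gh fx fc])
    have "cw_e p x k (cw_f p x k' (cw_f p c j g)) M = (-1) ^ (fst c * fst x) * cw_e p x k (cw_f p c j h) M"
      unfolding e1 by (rule lin_op_scale[OF lin_op_cw_e])
    also have "\<dots> = (-1) ^ (fst c * fst x) * ((-1) ^ (fst x * fst c) * (cw_f p c j (cw_e p x k h) M - (if x = c \<and> k = j then h M else 0)))"
      unfolding e2 using neg_one_power_square[of "fst x * fst c"] by (simp add: algebra_simps)
    also have "\<dots> = cw_f p c j (cw_e p x k h) M - (if x = c \<and> k = j then h M else 0)"
      using neg_one_power_comm[OF fc fx] by (simp add: mult.assoc[symmetric])
    finally show "cw_e p x k (cw_f p x k' (cw_f p c j g)) M = cw_f p c j (cw_e p x k (cw_f p x k' g)) M -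
      (if x = c then (if k = j then cw_f p c k' g M else 0) else 0)"
      by (simp add: h_def)
  qed
  also have "\<dots> = cw_f p c j (glN_op p n k k' g) M - (if k = j then cw_f p c k' g M else 0)"
    unfolding sum_subtractf glN_op_def lin_op_sum[OF lin_op_cw_f finite_U_basis] using c
    by (simp add: sum.delta finite_U_basis)
  finally show ?thesis .
qed

lemma glN_op_cw_e_comm:
  assumes g: "finite_wedge_supp g" and c: "c \<in> U_basis n"
  shows "glN_op p n k k' (cw_e p c j g) M = cw_e p c j (glN_op p n k k' g) M + (if k' = j then cw_e p c k g M else 0)"
proof -
  have fc: "fst c \<in> {0,1}" using c by (rule U_basis_fst)
  have "glN_op p n k k' (cw_e p c j g) M = (\<Sum>x\<in>U_basis n. cw_e p c j (cw_e p x k (cw_f p x k' g)) M +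
      (if x = c then (if k' = j then cw_e p c k g M else 0) else 0))"
    unfolding glN_op_def
  proof (rule sum.cong[OF refl])
    fix x assume x: "x \<in> U_basis n"
    have fx: "fst x \<in> {0,1}" using x by (rule U_basis_fst)
    define h where "h = cw_f p x k' g"
    have gh: "finite_wedge_supp h" unfolding h_def by (rule finite_wedge_supp_cw_f[OF g])
    have e1: "cw_f p x k' (cw_e p c j g) = (\<lambda>M. (-1) ^ (fst c * fst x) * cw_e p c j h M + (if c = x \<and> j = k' then g M else 0))"
      unfolding h_def by (rule ext) (rule cw_f_cw_e_comm[OF g fc fx])
    have e2: "cw_e p x k (cw_e p c j h) M = (-1) ^ (fst c * fst x) * cw_e p c j (cw_e p x k h) M"
      by (rule cw_e_cw_e_comm[OF gh fc fx])
    have "cw_e p x k (cw_f p x k' (cw_e p c j g)) M = (-1) ^ (fst c * fst x) * cw_e p x k (cw_e p c j h) M +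
        (if c = x \<and> j = k' then cw_e p x k g M else 0)"
      unfolding e1 lin_op_add[OF lin_op_cw_e] lin_op_scale[OF lin_op_cw_e] by (auto simp: lin_op_zero[OF lin_op_cw_e])
    also have "\<dots> = cw_e p c j (cw_e p x k h) M + (if c = x \<and> j = k' then cw_e p x k g M else 0)"
      unfolding e2 using neg_one_power_comm[OF fc fx] by (simp add: mult.assoc[symmetric])
    finally show "cw_e p x k (cw_f p x k' (cw_e p c j g)) M = cw_e p c j (cw_e p x k (cw_f p x k' g)) M +
      (if x = c then (if k' = j then cw_e p c k g M else 0) else 0)"
      by (auto simp: h_def)
  qed
  also have "\<dots> = cw_e p c j (glN_op p n k k' g) M + (if k' = j then cw_e p c k g M else 0)"
    unfolding sum.distrib glN_op_def lin_op_sum[OF lin_op_cw_e finite_U_basis] using c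
    by (simp add: sum.delta finite_U_basis)
  finally show ?thesis .
qed

lemma rhoE_cw: "rhoE p N \<sigma> \<tau> i j g = (\<lambda>M. \<Sum>k<N. cw_e p (\<sigma>, i) k (cw_f p (\<tau>, j) k g) M)"
  by (simp add: rhoE_def cw_e_def cw_f_def)

lemma lin_op_rhoE: "lin_op (rhoE p N \<sigma> \<tau> i j)"
  using lin_op_sum_ops[of "{..<N}" "\<lambda>k. cw_e p (\<sigma>, i) k \<circ> cw_f p (\<tau>, j) k"]
  by (simp add: rhoE_cw[abs_def] lin_op_comp lin_op_cw_e lin_op_cw_f)

lemma lin_op_cas_factor: "lin_op (cas_factor p N l c r)"
  unfolding cas_factor_def[abs_def] by (rule lin_op_cmult[OF lin_op_rhoE])

lemma lin_op_foldr_comp: "(\<forall>x\<in>set xs. lin_op (F x)) \<Longrightarrow> lin_op (foldr (\<circ>) (map F xs) id)"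
  by (induction xs) (auto simp: lin_op_id lin_op_comp)

lemma foldr_comp_append: "foldr (\<circ>) (map F (xs @ ys)) id = foldr (\<circ>) (map F xs) id \<circ> foldr (\<circ>) (map F ys) id"
  by (induction xs) auto

lemma sum_PiE_insert:
  assumes "x \<notin> S"
  shows "(\<Sum>c\<in>Pi\<^sub>E (insert x S) T. F c) = (\<Sum>y\<in>T x. \<Sum>g\<in>Pi\<^sub>E S T. F (g(x := y)))"
proof -
  have "(\<Sum>c\<in>Pi\<^sub>E (insert x S) T. F c) = (\<Sum>c\<in>(\<lambda>(y, g). g(x := y)) ` (T x \<times> Pi\<^sub>E S T). F c)"
    by (simp add: PiE_insert_eq)
  also have "\<dots> = (\<Sum>z\<in>T x \<times> Pi\<^sub>E S T. F ((\<lambda>(y, g). g(x := y)) z))"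
    by (rule sum.reindex_cong[OF inj_combinator[OF assms] refl]) simp
  also have "\<dots> = (\<Sum>y\<in>T x. \<Sum>g\<in>Pi\<^sub>E S T. F (g(x := y)))"
    by (simp add: sum.cartesian_product split_beta)
  finally show ?thesis .
qed

definition glN_annihilates :: "nat \<Rightarrow> nat \<Rightarrow> nat \<Rightarrow> fock \<Rightarrow> bool" where
  "glN_annihilates p n N f \<longleftrightarrow> (\<forall>k<N. \<forall>k'<N. \<forall>M. glN_op p n k k' f M = 0)"

lemma sum_sign_cw_f_rhoE:
  assumes f: "finite_wedge_supp f" and H: "glN_annihilates p n N f" and c: "c \<in> U_basis n"
    and k': "k' < N"
  shows "(\<Sum>x\<in>U_basis n. (-1) ^ fst x * cw_f p x k' (rhoE p N (fst x) (fst c) (snd x) (snd c) f) M)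
         = - of_nat N * cw_f p c k' f M"
proof -
  have "(\<Sum>x\<in>U_basis n. (-1) ^ fst x * cw_f p x k' (rhoE p N (fst x) (fst c) (snd x) (snd c) f) M)
      = (\<Sum>x\<in>U_basis n. (-1) ^ fst x * (\<Sum>k<N. cw_f p x k' (cw_e p x k (cw_f p c k f)) M))"
    unfolding rhoE_cw by (simp add: lin_op_sum[OF lin_op_cw_f])
  also have "\<dots> = (\<Sum>k<N. \<Sum>x\<in>U_basis n. (-1) ^ fst x * cw_f p x k' (cw_e p x k (cw_f p c k f)) M)"
    by (simp add: sum_distrib_left sum.swap[of _ "U_basis n"])
  also have "\<dots> = (\<Sum>k<N. glN_op p n k k' (cw_f p c k f) M)"
    by (simp add: sum_U_basis_cw_f_cw_e[OF finite_wedge_supp_cw_f[OF f]])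
  also have "\<dots> = (\<Sum>k<N. - cw_f p c k' f M)"
  proof (rule sum.cong[OF refl])
    fix k assume "k \<in> {..<N}"
    then have "glN_op p n k k' f = (\<lambda>M. 0)" using H k' by (auto simp: glN_annihilates_def)
    then show "glN_op p n k k' (cw_f p c k f) M = - cw_f p c k' f M"
      unfolding glN_op_cw_f_comm[OF f c] by (simp add: lin_op_zero[OF lin_op_cw_f])
  qed
  finally show ?thesis by simp
qed

lemma rhoE_contract:
  assumes f: "finite_wedge_supp f" and H: "glN_annihilates p n N f" and c: "c \<in> U_basis n"
  shows "(\<Sum>x\<in>U_basis n. (-1) ^ fst x * rhoE p N (fst b) (fst x) (snd b) (snd x)
            (rhoE p N (fst x) (fst c) (snd x) (snd c) f) M)
         = - of_nat N * rhoE p N (fst b) (fst c) (snd b) (snd c) f M"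
proof -
  have "(\<Sum>x\<in>U_basis n. (-1) ^ fst x * rhoE p N (fst b) (fst x) (snd b) (snd x)
            (rhoE p N (fst x) (fst c) (snd x) (snd c) f) M)
     = (\<Sum>k'<N. cw_e p b k' (\<lambda>M. \<Sum>x\<in>U_basis n. (-1) ^ fst x *
          cw_f p x k' (rhoE p N (fst x) (fst c) (snd x) (snd c) f) M) M)"
    unfolding rhoE_cw[of p N "fst b"] lin_op_sum[OF lin_op_cw_e finite_U_basis]
      lin_op_scale[OF lin_op_cw_e]
    by (simp add: sum_distrib_left sum.swap[of _ "U_basis n"])
  also have "\<dots> = (\<Sum>k'<N. - of_nat N * cw_e p b k' (cw_f p c k' f) M)"
    by (rule sum.cong[OF refl])
      (simp add: sum_sign_cw_f_rhoE[OF f H c] lin_op_neg[OF lin_op_cw_e] lin_op_scale[OF lin_op_cw_e])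
  also have "\<dots> = - of_nat N * rhoE p N (fst b) (fst c) (snd b) (snd c) f M"
    by (simp add: rhoE_cw sum_distrib_left)
  finally show ?thesis .
qed

definition casimir_term :: "nat \<Rightarrow> nat \<Rightarrow> nat \<Rightarrow> (nat \<Rightarrow> nat \<times> nat) \<Rightarrow> fock \<Rightarrow> fock" where
  "casimir_term p N l c = foldr (\<circ>) (map (cas_factor p N l c) [0..<l]) id"

lemma casimir_op_eq_sum:
  "casimir_op p q N l f M = (\<Sum>c\<in>Pi\<^sub>E {..<l} (\<lambda>_. U_basis (p + q)). casimir_term p N l c f M)"
  by (simp add: casimir_op_def casimir_term_def U_basis_def)

lemma casimir_op_Suc_0:
  assumes H: "glN_annihilates p (p + q) N f"
  shows "casimir_op p q N (Suc 0) f M = 0"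
proof -
  let ?X = "U_basis (p + q)"
  have "casimir_op p q N (Suc 0) f M
      = (\<Sum>y\<in>?X. \<Sum>c\<in>Pi\<^sub>E {} (\<lambda>_. ?X). casimir_term p N (Suc 0) (c(0 := y)) f M)"
    unfolding casimir_op_eq_sum lessThan_Suc lessThan_0 by (rule sum_PiE_insert) simp
  also have "\<dots> = (\<Sum>x\<in>?X. rhoE p N (fst x) (fst x) (snd x) (snd x) f M)"
    by (simp add: casimir_term_def cas_factor_def)
  also have "\<dots> = (\<Sum>k<N. glN_op p (p + q) k k f M)"
    unfolding rhoE_cw glN_op_def by (simp add: sum.swap[of _ ?X])
  also have "\<dots> = 0"
    using H unfolding glN_annihilates_def by (intro sum.neutral) blast
  finally show ?thesis .
qed

lemma cas_factor_cong:
  assumes "Suc r < l" "Suc r < l'" "c r = c' r" "c (Suc r) = c' (Suc r)"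
  shows "cas_factor p N l c r = cas_factor p N l' c' r"
  using assms by (simp add: cas_factor_def fun_eq_iff)

text \<open>Inserting a new index y between the last index c m and the first index c 0 replaces
  the last factor \<rho>(E_{c m, c 0}) by \<rho>(E_{c m, y}) (-1)^y \<rho>(E_{y, c 0}); summing over y
  contracts the pair (lemma rhoE_contract).\<close>

lemma casimir_term_Suc_Suc:
  assumes f: "finite_wedge_supp f" and H: "glN_annihilates p n N f" and c0: "c 0 \<in> U_basis n"
  shows "(\<Sum>y\<in>U_basis n. casimir_term p N (Suc (Suc m)) (c(Suc m := y)) f M)
         = - of_nat N * casimir_term p N (Suc m) c f M"
proof -
  define P where "P = foldr (\<circ>) (map (cas_factor p N (Suc m) c) [0..<m]) id"
  define t :: complex where "t = (if m = 0 then 1 else (-1) ^ fst (c m))"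
  define R where "R y = rhoE p N (fst y) (fst (c 0)) (snd y) (snd (c 0))" for y
  have linP: "lin_op P" unfolding P_def by (rule lin_op_foldr_comp) (simp add: lin_op_cas_factor)
  have prefix: "foldr (\<circ>) (map (cas_factor p N (Suc (Suc m)) (c(Suc m := y))) [0..<m]) id = P" for y
    unfolding P_def by (intro arg_cong[where f = "\<lambda>xs. foldr (\<circ>) xs id"] map_cong refl cas_factor_cong) auto
  have long: "casimir_term p N (Suc (Suc m)) (c(Suc m := y)) f = P (\<lambda>M. t *
      rhoE p N (fst (c m)) (fst y) (snd (c m)) (snd y) (\<lambda>M. (-1) ^ fst y * R y f M) M)" for y
  proof -
    have upt: "[0..<Suc (Suc m)] = [0..<m] @ [m, Suc m]" by simp
    show ?thesis
      unfolding casimir_term_def upt foldr_comp_append prefix[of y, symmetric]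
      by (simp add: cas_factor_def t_def R_def del: upt_Suc)
  qed
  have short: "casimir_term p N (Suc m) c f = P (\<lambda>M. t * rhoE p N (fst (c m)) (fst (c 0)) (snd (c m)) (snd (c 0)) f M)"
  proof -
    have upt: "[0..<Suc m] = [0..<m] @ [m]" by simp
    show ?thesis
      unfolding casimir_term_def upt foldr_comp_append P_def by (simp add: cas_factor_def t_def del: upt_Suc)
  qed
  have contract: "(\<lambda>M. \<Sum>y\<in>U_basis n. t * rhoE p N (fst (c m)) (fst y) (snd (c m)) (snd y)
        (\<lambda>M. (-1) ^ fst y * R y f M) M)
      = (\<lambda>M. - of_nat N * (t * rhoE p N (fst (c m)) (fst (c 0)) (snd (c m)) (snd (c 0)) f M))"
    using rhoE_contract[OF f H c0, of "c m"]
    by (simp add: R_def lin_op_scale[OF lin_op_rhoE] algebra_simps flip: sum_distrib_left)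
  have "(\<Sum>y\<in>U_basis n. casimir_term p N (Suc (Suc m)) (c(Suc m := y)) f M)
      = P (\<lambda>M. \<Sum>y\<in>U_basis n. t * rhoE p N (fst (c m)) (fst y) (snd (c m)) (snd y)
          (\<lambda>M. (-1) ^ fst y * R y f M) M) M"
    unfolding long lin_op_sum[OF linP finite_U_basis] ..
  also have "\<dots> = - of_nat N * casimir_term p N (Suc m) c f M"
    unfolding contract short lin_op_scale[OF linP] ..
  finally show ?thesis .
qed

lemma casimir_op_Suc:
  assumes f: "finite_wedge_supp f" and H: "glN_annihilates p (p + q) N f"
  shows "casimir_op p q N (Suc (Suc m)) f M = - of_nat N * casimir_op p q N (Suc m) f M"
proof -
  let ?X = "U_basis (p + q)"
  have "casimir_op p q N (Suc (Suc m)) f M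
      = (\<Sum>y\<in>?X. \<Sum>c\<in>Pi\<^sub>E {..<Suc m} (\<lambda>_. ?X). casimir_term p N (Suc (Suc m)) (c(Suc m := y)) f M)"
    unfolding casimir_op_eq_sum lessThan_Suc[of "Suc m"] by (rule sum_PiE_insert) simp
  also have "\<dots> = (\<Sum>c\<in>Pi\<^sub>E {..<Suc m} (\<lambda>_. ?X). \<Sum>y\<in>?X. casimir_term p N (Suc (Suc m)) (c(Suc m := y)) f M)"
    by (rule sum.swap)
  also have "\<dots> = (\<Sum>c\<in>Pi\<^sub>E {..<Suc m} (\<lambda>_. ?X). - of_nat N * casimir_term p N (Suc m) c f M)"
    by (intro sum.cong refl casimir_term_Suc_Suc[OF f H]) auto
  also have "\<dots> = - of_nat N * casimir_op p q N (Suc m) f M"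
    by (simp add: casimir_op_eq_sum sum_distrib_left)
  finally show ?thesis .
qed

lemma casimir_op_vanishes:
  assumes f: "finite_wedge_supp f" and H: "glN_annihilates p (p + q) N f" and l: "1 \<le> l"
  shows "casimir_op p q N l f = (\<lambda>_. 0)"
proof -
  obtain m where m: "l = Suc m" using l by (cases l) auto
  have "casimir_op p q N (Suc m) f M = 0" for M
    by (induction m) (simp_all add: casimir_op_Suc_0[OF H] casimir_op_Suc[OF f H])
  then show ?thesis unfolding m by auto
qed

definition glN_act :: "nat \<Rightarrow> nat \<Rightarrow> nat \<Rightarrow> (nat \<Rightarrow> nat \<Rightarrow> complex) \<Rightarrow> fock \<Rightarrow> fock" where
  "glN_act p n N X g = (\<lambda>M. \<Sum>k<N. \<Sum>k'<N. X k k' * glN_op p n k k' g M)"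

lemma lin_op_glN_op: "lin_op (glN_op p n k k')"
  using lin_op_sum_ops[of "U_basis n" "\<lambda>x. cw_e p x k \<circ> cw_f p x k'"]
  by (simp add: glN_op_def[abs_def] finite_U_basis lin_op_comp lin_op_cw_e lin_op_cw_f)

lemma lin_op_glN_act: "lin_op (glN_act p n N X)"
  unfolding glN_act_def[abs_def] by (intro lin_op_sum_ops lin_op_cmult lin_op_glN_op finite_lessThan)

lemma lin_op_glN_act_eq:
  assumes "lin_op L"
  shows "L (glN_act p n N X g) M = (\<Sum>k<N. \<Sum>k'<N. X k k' * L (glN_op p n k k' g) M)"
  unfolding glN_act_def by (simp add: lin_op_sum[OF assms] lin_op_scale[OF assms])

lemma glN_act_cw_e:
  assumes g: "finite_wedge_supp g" and c: "c \<in> U_basis n" and j: "j < N"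
  shows "glN_act p n N X (cw_e p c j g) M = cw_e p c j (glN_act p n N X g) M + (\<Sum>k<N. X k j * cw_e p c k g M)"
proof -
  have delta: "(\<Sum>k'<N. X k k' * (if k' = j then a else 0)) = X k j * a" for k a
    using j by (simp add: if_distrib cong: if_cong)
  have "glN_act p n N X (cw_e p c j g) M = (\<Sum>k<N. \<Sum>k'<N. X k k' * cw_e p c j (glN_op p n k k' g) M)
      + (\<Sum>k<N. \<Sum>k'<N. X k k' * (if k' = j then cw_e p c k g M else 0))"
    unfolding glN_act_def glN_op_cw_e_comm[OF g c] by (simp only: distrib_left sum.distrib)
  then show ?thesis by (simp only: delta lin_op_glN_act_eq[OF lin_op_cw_e])
qed

lemma glN_act_cw_f:
  assumes g: "finite_wedge_supp g" and c: "c \<in> U_basis n" and j: "j < N"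
  shows "glN_act p n N X (cw_f p c j g) M = cw_f p c j (glN_act p n N X g) M - (\<Sum>k'<N. X j k' * cw_f p c k' g M)"
proof -
  have delta: "(\<Sum>k<N. \<Sum>k'<N. X k k' * (if k = j then a k' else 0)) = (\<Sum>k'<N. X j k' * a k')" for a
    using j by (subst sum.swap) (simp add: if_distrib cong: if_cong)
  have "glN_act p n N X (cw_f p c j g) M = (\<Sum>k<N. \<Sum>k'<N. X k k' * cw_f p c j (glN_op p n k k' g) M)
      - (\<Sum>k<N. \<Sum>k'<N. X k k' * (if k = j then cw_f p c k' g M else 0))"
    unfolding glN_act_def glN_op_cw_f_comm[OF g c] by (simp only: right_diff_distrib sum_subtractf)
  then show ?thesis by (simp only: delta lin_op_glN_act_eq[OF lin_op_cw_f])
qed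

lemma uix_lt: "i < p \<Longrightarrow> uix p i = (True, i)" by (simp add: uix_def)
lemma uix_ge: "uix p (p + i) = (False, i)" by (simp add: uix_def)

lemma eps_plus_cw_e: "i < p \<Longrightarrow> eps (True, i, k) = cw_e p (1, i) k"
  by (simp add: cw_e_def uix_lt q_e_def fun_eq_iff)
lemma eps_minus_cw_f: "eps (False, i, k) = cw_f p (1, p + i) k"
  by (simp add: cw_f_def uix_ge q_f_def fun_eq_iff)
lemma mu_plus_cw_e: "i < p \<Longrightarrow> mu (True, i, k) = cw_e p (0, i) k"
  by (simp add: cw_e_def uix_lt q_e_def fun_eq_iff)
lemma mu_minus_cw_f: "mu (False, i, k) g = (\<lambda>M. - cw_f p (0, p + i) k g M)"
  by (simp add: cw_f_def uix_ge q_f_def fun_eq_iff)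

definition skew_hermitian :: "nat \<Rightarrow> (nat \<Rightarrow> nat \<Rightarrow> complex) \<Rightarrow> bool" where
  "skew_hermitian N X \<longleftrightarrow> (\<forall>a<N. \<forall>b<N. cnj (X a b) = - X b a)"

text \<open>On (V^-)^* the action is contragredient, with coefficients cnj X; skew-hermiticity turns
  them into the -X^T produced by glN_act_cw_f.\<close>

lemma glN_act_eps:
  assumes g: "finite_wedge_supp g" and v: "valid_ix p q N (s, i, k)" and X: "skew_hermitian N X"
  shows "glN_act p (p + q) N X (eps (s, i, k) g) M = eps (s, i, k) (glN_act p (p + q) N X g) M + eps_u N X (s, i, k) g M"
proof (cases s)
  case True
  then have i: "i < p" and k: "k < N" using v by (auto simp: valid_ix_def)
  have c: "(1, i) \<in> U_basis (p + q)" using i by (simp add: U_basis_def)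
  have e: "eps_u N X (s, i, k) g M = (\<Sum>k'<N. X k' k * cw_e p (1, i) k' g M)"
    using True i by (simp add: eps_u_def ucoef_def eps_plus_cw_e)
  show ?thesis unfolding e using True glN_act_cw_e[OF g c k] i by (simp add: eps_plus_cw_e)
next
  case False
  then have i: "i < q" and k: "k < N" using v by (auto simp: valid_ix_def)
  have c: "(1, p + i) \<in> U_basis (p + q)" using i by (simp add: U_basis_def)
  have e: "eps_u N X (s, i, k) g M = - (\<Sum>k'<N. X k k' * cw_f p (1, p + i) k' g M)"
    using False X k by (simp add: eps_u_def ucoef_def eps_minus_cw_f[where p=p] skew_hermitian_def sum_negf[symmetric])
  show ?thesis unfolding e using False glN_act_cw_f[OF g c k] by (simp add: eps_minus_cw_f[where p=p])
qed

lemma glN_act_mu: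
  assumes g: "finite_wedge_supp g" and v: "valid_ix p q N (s, i, k)" and X: "skew_hermitian N X"
  shows "glN_act p (p + q) N X (mu (s, i, k) g) M = mu (s, i, k) (glN_act p (p + q) N X g) M + mu_u N X (s, i, k) g M"
proof (cases s)
  case True
  then have i: "i < p" and k: "k < N" using v by (auto simp: valid_ix_def)
  have c: "(0, i) \<in> U_basis (p + q)" using i by (simp add: U_basis_def)
  have e: "mu_u N X (s, i, k) g M = (\<Sum>k'<N. X k' k * cw_e p (0, i) k' g M)"
    using True i by (simp add: mu_u_def ucoef_def mu_plus_cw_e)
  show ?thesis unfolding e using True glN_act_cw_e[OF g c k] i by (simp add: mu_plus_cw_e)
next
  case False
  then have i: "i < q" and k: "k < N" using v by (auto simp: valid_ix_def)
  have c: "(0, p + i) \<in> U_basis (p + q)" using i by (simp add: U_basis_def)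
  have e: "mu_u N X (s, i, k) g M = (\<Sum>k'<N. X k k' * cw_f p (0, p + i) k' g M)"
    using False X k by (simp add: mu_u_def ucoef_def mu_minus_cw_f[where p=p] skew_hermitian_def)
  have "glN_act p (p + q) N X (mu (s, i, k) g) M = - glN_act p (p + q) N X (cw_f p (0, p + i) k g) M"
    using False by (simp add: mu_minus_cw_f[where p=p] lin_op_neg[OF lin_op_glN_act])
  also have "\<dots> = - cw_f p (0, p + i) k (glN_act p (p + q) N X g) M + (\<Sum>k'<N. X k k' * cw_f p (0, p + i) k' g M)"
    unfolding glN_act_cw_f[OF g c k] by simp
  finally show ?thesis unfolding e using False by (simp add: mu_minus_cw_f[where p=p])
qed

definition has_deriv_pointwise :: "(real \<Rightarrow> fock) \<Rightarrow> fock \<Rightarrow> bool" where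
  "has_deriv_pointwise h hdv \<longleftrightarrow> (\<forall>M. ((\<lambda>t. h t M) has_vector_derivative hdv M) (at 0))"

text \<open>L' is at once the derivative at t = 0 of the operator family Lt (in Leibniz form) and the
  commutator of Xo with Lt 0. Both properties survive composition, so they pass from the
  generators to act_mono; as Xo kills the vacuum, the derivative of the U_N-action on a monomial
  is then Xo applied to it.\<close>

definition commutator_deriv :: "(fock \<Rightarrow> fock) \<Rightarrow> (real \<Rightarrow> fock \<Rightarrow> fock) \<Rightarrow> (fock \<Rightarrow> fock) \<Rightarrow> bool" where
  "commutator_deriv Xo Lt L' \<longleftrightarrow> lin_op (Lt 0) \<and> (\<forall>g. finite_wedge_supp g \<longrightarrow> finite_wedge_supp (Lt 0 g)) \<and>
     (\<forall>g M. finite_wedge_supp g \<longrightarrow> Xo (Lt 0 g) M = Lt 0 (Xo g) M + L' g M) \<and>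
     (\<forall>h hdv. has_deriv_pointwise h hdv \<longrightarrow> has_deriv_pointwise (\<lambda>t. Lt t (h t)) (\<lambda>M. Lt 0 hdv M + L' (h 0) M))"

lemma commutator_deriv_id: "commutator_deriv Xo (\<lambda>t. id) (\<lambda>g M. 0)"
  by (simp add: commutator_deriv_def lin_op_id)

lemma commutator_deriv_comp:
  assumes 1: "commutator_deriv Xo L1 L1'" and 2: "commutator_deriv Xo L2 L2'"
  shows "commutator_deriv Xo (\<lambda>t. L1 t \<circ> L2 t) (\<lambda>g M. L1 0 (L2' g) M + L1' (L2 0 g) M)"
proof -
  have l1: "lin_op (L1 0)" and g1: "\<And>g. finite_wedge_supp g \<Longrightarrow> finite_wedge_supp (L1 0 g)"
    and c1: "\<And>g M. finite_wedge_supp g \<Longrightarrow> Xo (L1 0 g) M = L1 0 (Xo g) M + L1' g M"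
    and d1: "\<And>h hdv. has_deriv_pointwise h hdv \<Longrightarrow> has_deriv_pointwise (\<lambda>t. L1 t (h t)) (\<lambda>M. L1 0 hdv M + L1' (h 0) M)"
    using 1 unfolding commutator_deriv_def by blast+
  have l2: "lin_op (L2 0)" and g2: "\<And>g. finite_wedge_supp g \<Longrightarrow> finite_wedge_supp (L2 0 g)"
    and c2: "\<And>g M. finite_wedge_supp g \<Longrightarrow> Xo (L2 0 g) M = L2 0 (Xo g) M + L2' g M"
    and d2: "\<And>h hdv. has_deriv_pointwise h hdv \<Longrightarrow> has_deriv_pointwise (\<lambda>t. L2 t (h t)) (\<lambda>M. L2 0 hdv M + L2' (h 0) M)"
    using 2 unfolding commutator_deriv_def by blast+
  have "lin_op (L1 0 \<circ> L2 0)" using l1 l2 by (rule lin_op_comp)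
  moreover have "\<forall>g. finite_wedge_supp g \<longrightarrow> finite_wedge_supp ((L1 0 \<circ> L2 0) g)" using g1 g2 by simp
  moreover have "Xo ((L1 0 \<circ> L2 0) g) M = (L1 0 \<circ> L2 0) (Xo g) M + (L1 0 (L2' g) M + L1' (L2 0 g) M)"
    if g: "finite_wedge_supp g" for g M
  proof -
    have e: "Xo (L2 0 g) = (\<lambda>M. L2 0 (Xo g) M + L2' g M)" using c2[OF g] by auto
    have "Xo ((L1 0 \<circ> L2 0) g) M = L1 0 (Xo (L2 0 g)) M + L1' (L2 0 g) M"
      using c1[OF g2[OF g]] by simp
    also have "\<dots> = L1 0 (L2 0 (Xo g)) M + L1 0 (L2' g) M + L1' (L2 0 g) M"
      unfolding e lin_op_add[OF l1] by simp
    finally show ?thesis by simp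
  qed
  moreover have "has_deriv_pointwise (\<lambda>t. (L1 t \<circ> L2 t) (h t)) (\<lambda>M. (L1 0 \<circ> L2 0) hdv M + (L1 0 (L2' (h 0)) M + L1' (L2 0 (h 0)) M))"
    if h: "has_deriv_pointwise h hdv" for h hdv
  proof -
    have "has_deriv_pointwise (\<lambda>t. L1 t (L2 t (h t))) (\<lambda>M. L1 0 (\<lambda>M. L2 0 hdv M + L2' (h 0) M) M + L1' (L2 0 (h 0)) M)"
      using d1[OF d2[OF h]] by simp
    then show ?thesis unfolding lin_op_add[OF l1] by (simp add: add.assoc)
  qed
  ultimately show ?thesis unfolding commutator_deriv_def by blast
qed

definition has_commutator_deriv :: "(fock \<Rightarrow> fock) \<Rightarrow> (real \<Rightarrow> fock \<Rightarrow> fock) \<Rightarrow> bool" where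
  "has_commutator_deriv Xo Lt \<longleftrightarrow> (\<exists>L'. commutator_deriv Xo Lt L')"

lemma has_commutator_deriv_comp: "has_commutator_deriv Xo L1 \<Longrightarrow> has_commutator_deriv Xo L2 \<Longrightarrow> has_commutator_deriv Xo (\<lambda>t. L1 t \<circ> L2 t)"
  unfolding has_commutator_deriv_def using commutator_deriv_comp by blast

lemma has_commutator_deriv_id: "has_commutator_deriv Xo (\<lambda>t. id)"
  unfolding has_commutator_deriv_def using commutator_deriv_id by blast

lemma has_commutator_deriv_funpow: "has_commutator_deriv Xo L \<Longrightarrow> has_commutator_deriv Xo (\<lambda>t. L t ^^ n)"
proof (induction n)
  case 0 then show ?case using has_commutator_deriv_id[of Xo] by (simp add: id_def)
next
  case (Suc n)
  then have "has_commutator_deriv Xo (\<lambda>t. L t \<circ> L t ^^ n)" by (intro has_commutator_deriv_comp) auto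
  moreover have "(\<lambda>t. L t ^^ Suc n) = (\<lambda>t. L t \<circ> L t ^^ n)" by simp
  ultimately show ?case by metis
qed

lemma has_commutator_deriv_foldr:
  assumes "\<forall>a\<in>set xs. has_commutator_deriv Xo (\<lambda>t. F t a)" and "has_commutator_deriv Xo R"
  shows "has_commutator_deriv Xo (\<lambda>t. foldr (\<lambda>a g. F t a \<circ> g) xs (R t))"
  using assms by (induction xs) (auto intro: has_commutator_deriv_comp)

lemma finite_wedge_supp_vac: "finite_wedge_supp vac" by (auto simp: finite_wedge_supp_def vac_def)

lemma iota_vac: "iota a vac = (\<lambda>_. 0)"
  by (auto simp: fun_eq_iff iota_def vac_def)
lemma dlt_vac: "dlt a vac = (\<lambda>_. 0)"
proof (rule ext)
  fix M :: mono
  obtain S m where M: "M = (S, m)" by (cases M)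
  have "m(a := m a + 1) \<noteq> (\<lambda>_. 0)"
    by (metis fun_upd_same add_is_0 zero_neq_one)
  then show "dlt a vac M = 0" unfolding M dlt_apply by (simp add: vac_def)
qed

lemma glN_op_vac: "glN_op p n k k' vac M = 0"
proof -
  define c where "c j = (if j < p then 0 else - (if k = k' then vac M else 0))" for j
  have "glN_op p n k k' vac M = (\<Sum>x\<in>U_basis n. (-1) ^ fst x * c (snd x))"
    unfolding glN_op_def
  proof (rule sum.cong[OF refl])
    fix x assume x: "x \<in> U_basis n"
    have fx: "fst x \<in> {0, 1}" using x by (rule U_basis_fst)
    show "cw_e p x k (cw_f p x k' vac) M = (-1) ^ fst x * c (snd x)"
    proof (cases "snd x < p")
      case True
      then have "cw_f p x k' vac = (\<lambda>_. 0)"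
        by (auto simp: cw_f_def q_f_def uix_def iota_vac dlt_vac)
      then show ?thesis using True by (simp add: c_def lin_op_zero[OF lin_op_cw_e])
    next
      case False
      then have "cw_e p x k vac = (\<lambda>_. 0)"
        by (auto simp: cw_e_def q_e_def uix_def iota_vac dlt_vac)
      then have "0 = (-1) ^ (fst x * fst x) * cw_e p x k (cw_f p x k' vac) M + (if k = k' then vac M else 0)"
        using cw_f_cw_e_comm[OF finite_wedge_supp_vac fx fx, of p k' k M]
        by (simp add: lin_op_zero[OF lin_op_cw_f])
      moreover have "(-1::complex) ^ (fst x * fst x) = (-1) ^ fst x" using fx by auto
      ultimately have "(-1) ^ fst x * cw_e p x k (cw_f p x k' vac) M = - (if k = k' then vac M else 0)"
        by (simp add: eq_neg_iff_add_eq_0)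
      then have "(-1) ^ fst x * ((-1) ^ fst x * cw_e p x k (cw_f p x k' vac) M) = (-1) ^ fst x * c (snd x)"
        using False by (simp add: c_def)
      then show ?thesis by (simp add: neg_one_power_square flip: mult.assoc)
    qed
  qed
  also have "\<dots> = 0" by (rule sum_U_basis_sign)
  finally show ?thesis .
qed

lemma glN_act_vac: "glN_act p n N X vac = (\<lambda>_. 0)"
  by (simp add: glN_act_def glN_op_vac fun_eq_iff)

lemma has_deriv_pointwise_eps: "has_deriv_pointwise h hdv \<Longrightarrow> has_deriv_pointwise (\<lambda>t. eps b (h t)) (eps b hdv)"
  unfolding has_deriv_pointwise_def
proof (intro allI)
  fix M :: mono
  assume h: "\<forall>M. ((\<lambda>t. h t M) has_vector_derivative hdv M) (at 0)"
  obtain S m where M: "M = (S, m)" by (cases M)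
  show "((\<lambda>t. eps b (h t) M) has_vector_derivative eps b hdv M) (at 0)"
    unfolding M eps_apply
    by (cases "b \<in> S") (auto intro!: has_vector_derivative_mult_right h[rule_format])
qed

lemma has_deriv_pointwise_mu: "has_deriv_pointwise h hdv \<Longrightarrow> has_deriv_pointwise (\<lambda>t. mu b (h t)) (mu b hdv)"
  unfolding has_deriv_pointwise_def
proof (intro allI)
  fix M :: mono
  assume h: "\<forall>M. ((\<lambda>t. h t M) has_vector_derivative hdv M) (at 0)"
  obtain S m where M: "M = (S, m)" by (cases M)
  show "((\<lambda>t. mu b (h t) M) has_vector_derivative mu b hdv M) (at 0)"
    unfolding M mu_apply
    by (cases "0 < m b") (auto intro!: h[rule_format])
qed

definition tangent_curve :: "nat \<Rightarrow> (real \<Rightarrow> nat \<Rightarrow> nat \<Rightarrow> complex) \<Rightarrow> (nat \<Rightarrow> nat \<Rightarrow> complex) \<Rightarrow> bool" where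
  "tangent_curve N u X \<longleftrightarrow> (\<forall>a b. ((\<lambda>t. u t a b) has_vector_derivative X a b) (at 0)) \<and>
     (\<forall>a<N. \<forall>b<N. u 0 a b = (if a = b then 1 else 0)) \<and> skew_hermitian N X"

lemma ucoef_deriv:
  assumes "\<forall>a b. ((\<lambda>t. u t a b) has_vector_derivative X a b) (at 0)"
  shows "((\<lambda>t. ucoef (u t) s k' k) has_vector_derivative ucoef X s k' k) (at 0)"
  using assms by (cases s) (auto simp: ucoef_def intro!: has_vector_derivative_cnj)

definition ucomb :: "nat \<Rightarrow> (nat \<Rightarrow> nat \<Rightarrow> complex) \<Rightarrow> (gix \<Rightarrow> fock \<Rightarrow> fock) \<Rightarrow> gix \<Rightarrow> fock \<Rightarrow> fock" where
  "ucomb N u G a g = (case a of (s, i, k) \<Rightarrow> (\<lambda>M. \<Sum>k'<N. ucoef u s k' k * G (s, i, k') g M))"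

lemma eps_u_ucomb: "eps_u N u = ucomb N u eps"
  by (simp add: fun_eq_iff eps_u_def ucomb_def)
lemma mu_u_ucomb: "mu_u N u = ucomb N u mu"
  by (simp add: fun_eq_iff mu_u_def ucomb_def)

lemma ucomb_apply: "ucomb N u G (s, i, k) g M = (\<Sum>k'<N. ucoef u s k' k * G (s, i, k') g M)"
  by (simp add: ucomb_def)

lemma ucomb_id:
  assumes "\<forall>a<N. \<forall>b<N. u a b = (if a = b then 1 else 0)" "k < N"
  shows "ucomb N u G (s, i, k) = G (s, i, k)"
proof (intro ext)
  fix g M
  have "(\<Sum>k'<N. ucoef u s k' k * G (s, i, k') g M) = (\<Sum>k'<N. if k' = k then G (s, i, k') g M else 0)"
    using assms by (intro sum.cong) (auto simp: ucoef_def)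
  then show "ucomb N u G (s, i, k) g M = G (s, i, k) g M"
    using assms(2) by (simp add: ucomb_apply)
qed

lemma commutator_deriv_ucomb:
  assumes F: "tangent_curve N u X" and k: "k < N"
    and lin: "\<And>a. lin_op (G a)"
    and supp: "\<And>a g. finite_wedge_supp g \<Longrightarrow> finite_wedge_supp (G a g)"
    and deriv: "\<And>a h hdv. has_deriv_pointwise h hdv \<Longrightarrow> has_deriv_pointwise (\<lambda>t. G a (h t)) (G a hdv)"
    and comm: "\<And>g M. finite_wedge_supp g \<Longrightarrow>
      Xo (G (s, i, k) g) M = G (s, i, k) (Xo g) M + ucomb N X G (s, i, k) g M"
  shows "commutator_deriv Xo (\<lambda>t. ucomb N (u t) G (s, i, k)) (ucomb N X G (s, i, k))"
proof -
  have ud: "\<forall>a b. ((\<lambda>t. u t a b) has_vector_derivative X a b) (at 0)"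
    and u0: "\<forall>a<N. \<forall>b<N. u 0 a b = (if a = b then 1 else 0)"
    using F by (auto simp: tangent_curve_def)
  have "has_deriv_pointwise (\<lambda>t. ucomb N (u t) G (s, i, k) (h t))
      (\<lambda>M. G (s, i, k) hdv M + ucomb N X G (s, i, k) (h 0) M)"
    if h: "has_deriv_pointwise h hdv" for h hdv
    unfolding has_deriv_pointwise_def
  proof
    fix M
    have "((\<lambda>t. G (s, i, k') (h t) M) has_vector_derivative G (s, i, k') hdv M) (at 0)" for k'
      using deriv[OF h] unfolding has_deriv_pointwise_def by blast
    then have "((\<lambda>t. \<Sum>k'<N. ucoef (u t) s k' k * G (s, i, k') (h t) M) has_vector_derivative
        (\<Sum>k'<N. ucoef (u 0) s k' k * G (s, i, k') hdv M + ucoef X s k' k * G (s, i, k') (h 0) M)) (at 0)"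
      by (intro has_vector_derivative_sum has_vector_derivative_mult ucoef_deriv[OF ud])
    moreover have "(\<Sum>k'<N. ucoef (u 0) s k' k * G (s, i, k') hdv M) = G (s, i, k) hdv M"
      using ucomb_apply[of N "u 0" G s i k hdv M] ucomb_id[OF u0 k, of G s i] by simp
    ultimately show "((\<lambda>t. ucomb N (u t) G (s, i, k) (h t) M) has_vector_derivative
        G (s, i, k) hdv M + ucomb N X G (s, i, k) (h 0) M) (at 0)"
      by (simp add: ucomb_apply sum.distrib)
  qed
  then show ?thesis
    unfolding commutator_deriv_def ucomb_id[OF u0 k] using lin supp comm by blast
qed

lemma commutator_deriv_eps_u:
  assumes F: "tangent_curve N u X" and v: "valid_ix p q N a"
  shows "commutator_deriv (glN_act p (p + q) N X) (\<lambda>t. eps_u N (u t) a) (eps_u N X a)"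
proof -
  obtain s i k where a: "a = (s, i, k)" and k: "k < N"
    using v by (cases a) (auto simp: valid_ix_def)
  have X: "skew_hermitian N X" using F by (simp add: tangent_curve_def)
  show ?thesis
    unfolding a eps_u_ucomb
    using glN_act_eps[OF _ v[unfolded a] X]
    by (intro commutator_deriv_ucomb[OF F k] lin_op_eps finite_wedge_supp_eps has_deriv_pointwise_eps)
      (simp_all add: eps_u_ucomb)
qed

lemma commutator_deriv_mu_u:
  assumes F: "tangent_curve N u X" and v: "valid_ix p q N a"
  shows "commutator_deriv (glN_act p (p + q) N X) (\<lambda>t. mu_u N (u t) a) (mu_u N X a)"
proof -
  obtain s i k where a: "a = (s, i, k)" and k: "k < N"
    using v by (cases a) (auto simp: valid_ix_def)
  have X: "skew_hermitian N X" using F by (simp add: tangent_curve_def)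
  show ?thesis
    unfolding a mu_u_ucomb
    using glN_act_mu[OF _ v[unfolded a] X]
    by (intro commutator_deriv_ucomb[OF F k] lin_op_mu finite_wedge_supp_mu has_deriv_pointwise_mu)
      (simp_all add: mu_u_ucomb)
qed

lemma finite_valid_ix: "finite {a. valid_ix p q N a}"
proof (rule finite_subset)
  show "{a. valid_ix p q N a} \<subseteq> UNIV \<times> {..<p + q} \<times> {..<N}"
    by (auto simp: valid_ix_def split: if_splits)
qed simp

lemma has_commutator_deriv_act_mono:
  assumes F: "tangent_curve N u X" and v: "valid_mono p q N (S, m)"
  shows "has_commutator_deriv (glN_act p (p + q) N X) (\<lambda>t. foldr (\<lambda>a g. eps_u N (u t) a \<circ> g) (sorted_list_of_set S)
           (foldr (\<lambda>b g. (mu_u N (u t) b ^^ m b) \<circ> g) (sorted_list_of_set {b. valid_ix p q N b \<and> 0 < m b}) id))"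
proof -
  have S: "S \<subseteq> {a. valid_ix p q N a}" using v by (simp add: valid_mono_def)
  then have fS: "finite S" using finite_valid_ix finite_subset by blast
  have fB: "finite {b. valid_ix p q N b \<and> 0 < m b}"
    using finite_valid_ix by (rule finite_subset[rotated]) auto
  have eps: "has_commutator_deriv (glN_act p (p + q) N X) (\<lambda>t. eps_u N (u t) a)" if "valid_ix p q N a" for a
    using commutator_deriv_eps_u[OF F that] unfolding has_commutator_deriv_def by blast
  have mu: "has_commutator_deriv (glN_act p (p + q) N X) (\<lambda>t. mu_u N (u t) a)" if "valid_ix p q N a" for a
    using commutator_deriv_mu_u[OF F that] unfolding has_commutator_deriv_def by blast
  show ?thesis
    using S fS fB
    by (intro has_commutator_deriv_foldr has_commutator_deriv_id ballI has_commutator_deriv_funpow eps mu) auto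
qed

lemma act_mono_deriv:
  assumes F: "tangent_curve N u X" and v: "valid_mono p q N M0"
  shows "((\<lambda>t. act_mono p q N (u t) M0 M) has_vector_derivative glN_act p (p + q) N X (act_mono p q N (u 0) M0) M) (at 0)"
proof -
  obtain S m where M0: "M0 = (S, m)" by (cases M0)
  define ch where "ch t = foldr (\<lambda>a g. eps_u N (u t) a \<circ> g) (sorted_list_of_set S)
           (foldr (\<lambda>b g. (mu_u N (u t) b ^^ m b) \<circ> g) (sorted_list_of_set {b. valid_ix p q N b \<and> 0 < m b}) id)" for t
  have am: "act_mono p q N (u t) M0 = ch t vac" for t by (simp add: M0 act_mono_def ch_def)
  obtain L' where L: "commutator_deriv (glN_act p (p + q) N X) ch L'"
    using has_commutator_deriv_act_mono[OF F v[unfolded M0]] unfolding has_commutator_deriv_def ch_def by blast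
  have pv: "has_deriv_pointwise (\<lambda>t. vac) (\<lambda>_. 0)" by (simp add: has_deriv_pointwise_def)
  have "has_deriv_pointwise (\<lambda>t. ch t vac) (\<lambda>M. ch 0 (\<lambda>_. 0) M + L' vac M)"
    using L pv unfolding commutator_deriv_def by blast
  then have "((\<lambda>t. ch t vac M) has_vector_derivative ch 0 (\<lambda>_. 0) M + L' vac M) (at 0)"
    unfolding has_deriv_pointwise_def by blast
  moreover have "ch 0 (\<lambda>_. 0) M = 0" using L unfolding commutator_deriv_def by (metis lin_op_zero)
  moreover have "glN_act p (p + q) N X (ch 0 vac) M = ch 0 (glN_act p (p + q) N X vac) M + L' vac M"
    using L finite_wedge_supp_vac unfolding commutator_deriv_def by blast
  ultimately show ?thesis unfolding am glN_act_vac by simp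
qed

lemma glN_act_invariant_vanishes:
  assumes f: "f \<in> V_lambda p q N" and U: "\<forall>t. unitary_mat N (u t)" and F: "tangent_curve N u X"
  shows "glN_act p (p + q) N X f M = 0"
proof -
  have fA: "f \<in> A_V p q N" and inv: "\<And>u. unitary_mat N u \<Longrightarrow> UN_act p q N u f = f"
    using f by (auto simp: V_lambda_def)
  define FS where "FS = {M0. f M0 \<noteq> 0}"
  have fin: "finite FS" and val: "\<And>M0. M0 \<in> FS \<Longrightarrow> valid_mono p q N M0"
    using fA by (auto simp: A_V_def FS_def)
  have "((\<lambda>t. \<Sum>M0\<in>FS. f M0 * act_mono p q N (u t) M0 M) has_vector_derivative
      (\<Sum>M0\<in>FS. f M0 * glN_act p (p + q) N X (act_mono p q N (u 0) M0) M)) (at 0)"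
    by (intro has_vector_derivative_sum has_vector_derivative_mult_right act_mono_deriv[OF F val])
  moreover have "(\<lambda>t. \<Sum>M0\<in>FS. f M0 * act_mono p q N (u t) M0 M) = (\<lambda>t. f M)"
  proof
    fix t
    have "UN_act p q N (u t) f M = f M" using inv U by simp
    then show "(\<Sum>M0\<in>FS. f M0 * act_mono p q N (u t) M0 M) = f M" by (simp add: UN_act_def FS_def)
  qed
  moreover have "(\<Sum>M0\<in>FS. f M0 * glN_act p (p + q) N X (act_mono p q N (u 0) M0) M) = glN_act p (p + q) N X f M"
  proof -
    have "(\<Sum>M0\<in>FS. f M0 * glN_act p (p + q) N X (act_mono p q N (u 0) M0) M)
        = glN_act p (p + q) N X (\<lambda>M. \<Sum>M0\<in>FS. f M0 * act_mono p q N (u 0) M0 M) M"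
      by (simp add: lin_op_sum[OF lin_op_glN_act fin] lin_op_scale[OF lin_op_glN_act])
    also have "(\<lambda>M. \<Sum>M0\<in>FS. f M0 * act_mono p q N (u 0) M0 M) = f"
      using inv[OF U[rule_format, of 0]] by (simp add: UN_act_def FS_def)
    finally show ?thesis .
  qed
  ultimately have "((\<lambda>t. f M) has_vector_derivative glN_act p (p + q) N X f M) (at 0)" by simp
  moreover have "((\<lambda>t. f M) has_vector_derivative 0) (at 0)" by simp
  ultimately show ?thesis using vector_derivative_unique_at by blast
qed

definition embed_block :: "nat set \<Rightarrow> (nat \<Rightarrow> nat \<Rightarrow> complex) \<Rightarrow> nat \<Rightarrow> nat \<Rightarrow> complex" where
  "embed_block K w = (\<lambda>a b. if a \<in> K \<and> b \<in> K then w a b else if a = b then 1 else 0)"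

lemma unitary_embed_block:
  assumes K: "K \<subseteq> {..<N}" and w: "\<forall>a\<in>K. \<forall>b\<in>K. (\<Sum>r\<in>K. cnj (w r a) * w r b) = (if a = b then 1 else 0)"
  shows "unitary_mat N (embed_block K w)"
  unfolding unitary_mat_def
proof (intro allI impI)
  fix i j assume i: "i < N" and j: "j < N"
  show "(\<Sum>r<N. cnj (embed_block K w r i) * embed_block K w r j) = (if i = j then 1 else 0)"
  proof (cases "i \<in> K")
    case False
    have "(\<Sum>r<N. cnj (embed_block K w r i) * embed_block K w r j) = (\<Sum>r<N. if r = i then embed_block K w i j else 0)"
      by (rule sum.cong[OF refl]) (use False in \<open>auto simp: embed_block_def\<close>)
    also have "\<dots> = embed_block K w i j" using i by (simp add: sum.delta)
    also have "\<dots> = (if i = j then 1 else 0)" using False by (simp add: embed_block_def)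
    finally show ?thesis .
  next
    case iK: True
    show ?thesis
    proof (cases "j \<in> K")
      case False
      have "(\<Sum>r<N. cnj (embed_block K w r i) * embed_block K w r j) = (\<Sum>r<N. if r = j then cnj (embed_block K w j i) else 0)"
        by (rule sum.cong[OF refl]) (use False in \<open>auto simp: embed_block_def\<close>)
      also have "\<dots> = cnj (embed_block K w j i)" using j by (simp add: sum.delta)
      also have "\<dots> = (if i = j then 1 else 0)" using False iK by (auto simp: embed_block_def)
      finally show ?thesis .
    next
      case jK: True
      have fK: "finite K" using K finite_subset by blast
      have "(\<Sum>r<N. cnj (embed_block K w r i) * embed_block K w r j) = (\<Sum>r\<in>K. cnj (embed_block K w r i) * embed_block K w r j)"
        by (rule sum.mono_neutral_right) (use K iK in \<open>auto simp: embed_block_def\<close>)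
      also have "\<dots> = (\<Sum>r\<in>K. cnj (w r i) * w r j)"
        by (rule sum.cong[OF refl]) (use iK jK in \<open>auto simp: embed_block_def\<close>)
      also have "\<dots> = (if i = j then 1 else 0)" using w iK jK by blast
      finally show ?thesis .
    qed
  qed
qed

lemma tangent_curve_embed_block:
  assumes w0: "\<forall>a\<in>K. \<forall>b\<in>K. w 0 a b = (if a = b then 1 else 0)"
    and wd: "\<forall>a\<in>K. \<forall>b\<in>K. ((\<lambda>t. w t a b) has_vector_derivative X a b) (at 0)"
    and Xz: "\<forall>a b. \<not> (a \<in> K \<and> b \<in> K) \<longrightarrow> X a b = 0"
    and X: "skew_hermitian N X"
  shows "tangent_curve N (\<lambda>t. embed_block K (w t)) X"
  unfolding tangent_curve_def
proof (intro conjI allI impI)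
  fix a b
  show "((\<lambda>t. embed_block K (w t) a b) has_vector_derivative X a b) (at 0)"
    using wd Xz by (cases "a \<in> K \<and> b \<in> K") (auto simp: embed_block_def)
next
  fix a b assume "a < N" "b < N"
  show "embed_block K (w 0) a b = (if a = b then 1 else 0)" using w0 by (auto simp: embed_block_def)
qed (rule X)

definition rotation :: "nat set \<Rightarrow> (nat \<Rightarrow> nat \<Rightarrow> complex) \<Rightarrow> real \<Rightarrow> nat \<Rightarrow> nat \<Rightarrow> complex" where
  "rotation K Y t = embed_block K
     (\<lambda>a b. complex_of_real (cos t) * (if a = b then 1 else 0) + complex_of_real (sin t) * Y a b)"

text \<open>If Y is skew-hermitian with Y Y = -1 on the block K, then rotation K Y t = exp (t Y),
  a one-parameter subgroup of U_N with tangent Y.\<close>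

lemma unitary_rotation:
  assumes K: "K \<subseteq> {..<N}"
    and skew: "\<forall>a\<in>K. \<forall>b\<in>K. cnj (Y a b) = - Y b a"
    and sq: "\<forall>a\<in>K. \<forall>b\<in>K. (\<Sum>r\<in>K. Y a r * Y r b) = - (if a = b then 1 else 0)"
  shows "unitary_mat N (rotation K Y t)"
proof -
  have fK: "finite K" using K finite_subset by blast
  define c where "c = complex_of_real (cos t)"
  define s where "s = complex_of_real (sin t)"
  have cs: "c * c + s * s = 1"
    unfolding c_def s_def by (metis of_real_add of_real_mult of_real_1 sin_cos_squared_add power2_eq_square add.commute)
  have delta: "(if P then x else 0) * z = (if P then x * z else 0)"
    "z * (if P then x else 0) = (if P then z * x else 0)" for P and x z :: complex
    by simp_all
  have entries: "(\<Sum>r\<in>K. cnj (c * (if r = a then 1 else 0) + s * Y r a) * (c * (if r = b then 1 else 0) + s * Y r b))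
      = (if a = b then 1 else 0)" if a: "a \<in> K" and b: "b \<in> K" for a b
  proof -
    have "(\<Sum>r\<in>K. cnj (c * (if r = a then 1 else 0) + s * Y r a) * (c * (if r = b then 1 else 0) + s * Y r b))
        = (\<Sum>r\<in>K. c * c * (if r = a then (if r = b then 1 else 0) else 0) + c * s * (if r = a then Y r b else 0)
            - s * c * (if r = b then Y a r else 0) - s * s * (Y a r * Y r b))"
      using a skew by (intro sum.cong) (auto simp: c_def s_def algebra_simps)
    also have "\<dots> = (c * c + s * s) * (if a = b then 1 else 0)"
      using a b sq fK by (simp add: sum.distrib sum_subtractf flip: sum_distrib_left)
    finally show ?thesis unfolding cs by simp
  qed
  show ?thesis
    unfolding rotation_def by (intro unitary_embed_block[OF K] ballI) (simp only: entries[unfolded c_def s_def])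
qed

lemma tangent_curve_rotation:
  assumes X: "skew_hermitian N Y" and Y0: "\<forall>a b. \<not> (a \<in> K \<and> b \<in> K) \<longrightarrow> Y a b = 0"
  shows "tangent_curve N (rotation K Y) Y"
proof -
  have "((\<lambda>t. complex_of_real (cos t) * d + complex_of_real (sin t) * y) has_vector_derivative y) (at 0)"
    for d y :: complex
    using has_vector_derivative_of_real[OF DERIV_cos[of 0]] has_vector_derivative_of_real[OF DERIV_sin[of 0]]
    by (auto intro!: derivative_eq_intros)
  then show ?thesis
    unfolding rotation_def by (intro tangent_curve_embed_block[OF _ _ Y0 X]) auto
qed

lemma glN_act_rotation_vanishes:
  assumes f: "f \<in> V_lambda p q N" and K: "K \<subseteq> {..<N}" and X: "skew_hermitian N Y"
    and Y0: "\<forall>a b. \<not> (a \<in> K \<and> b \<in> K) \<longrightarrow> Y a b = 0"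
    and sq: "\<forall>a\<in>K. \<forall>b\<in>K. (\<Sum>r\<in>K. Y a r * Y r b) = - (if a = b then 1 else 0)"
  shows "glN_act p (p + q) N Y f M = 0"
proof (rule glN_act_invariant_vanishes[OF f _ tangent_curve_rotation[OF X Y0]])
  have "\<forall>a\<in>K. \<forall>b\<in>K. cnj (Y a b) = - Y b a" using X K by (auto simp: skew_hermitian_def)
  then show "\<forall>t. unitary_mat N (rotation K Y t)" using unitary_rotation[OF K _ sq] by blast
qed

lemma glN_act_matrix_unit:
  assumes "k < N" "k' < N"
  shows "glN_act p n N (\<lambda>a b. if a = k \<and> b = k' then c else 0) g M = c * glN_op p n k k' g M"
proof -
  have "(if a = k \<and> b = k' then c else 0) * z = (if b = k' then (if a = k then c * z else 0) else 0)"
    for a b and z :: complex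
    by simp
  then show ?thesis using assms by (simp add: glN_act_def)
qed

lemma glN_act_add: "glN_act p n N (\<lambda>a b. X a b + Y a b) g M = glN_act p n N X g M + glN_act p n N Y g M"
  by (simp add: glN_act_def distrib_right sum.distrib)

lemma glN_annihilates_of_invariant:
  assumes f: "f \<in> V_lambda p q N"
  shows "glN_annihilates p (p + q) N f"
  unfolding glN_annihilates_def
proof (intro allI impI)
  fix k k' M assume k: "k < N" and k': "k' < N"
  let ?E = "\<lambda>k k' c a b. if a = k \<and> b = k' then c else (0::complex)"
  show "glN_op p (p + q) k k' f M = 0"
  proof (cases "k = k'")
    case True
    have "glN_act p (p + q) N (?E k k \<i>) f M = 0"
      using k by (intro glN_act_rotation_vanishes[OF f, of "{k}"]) (auto simp: skew_hermitian_def)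
    then show ?thesis using True k by (simp add: glN_act_matrix_unit)
  next
    case False
    have "glN_act p (p + q) N (\<lambda>a b. ?E k' k 1 a b + ?E k k' (-1) a b) f M = 0"
      using k k' False
      by (intro glN_act_rotation_vanishes[OF f, of "{k, k'}"]) (auto simp: skew_hermitian_def)
    then have "glN_op p (p + q) k' k f M = glN_op p (p + q) k k' f M"
      using k k' by (simp add: glN_act_add glN_act_matrix_unit)
    moreover have "glN_act p (p + q) N (\<lambda>a b. ?E k' k \<i> a b + ?E k k' \<i> a b) f M = 0"
      using k k' False
      by (intro glN_act_rotation_vanishes[OF f, of "{k, k'}"]) (auto simp: skew_hermitian_def)
    then have "glN_op p (p + q) k' k f M + glN_op p (p + q) k k' f M = 0"
      using k k' by (simp add: glN_act_add glN_act_matrix_unit distrib_left[symmetric])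
    ultimately show ?thesis by simp
  qed
qed

lemma finite_wedge_supp_of_A_V:
  assumes "f \<in> A_V p q N"
  shows "finite_wedge_supp f"
  unfolding finite_wedge_supp_def
proof (intro allI impI)
  fix S :: "gix set" and m :: "gix \<Rightarrow> nat" assume inf: "infinite S"
  show "f (S, m) = 0"
  proof (rule ccontr)
    assume "f (S, m) \<noteq> 0"
    then have "valid_mono p q N (S, m)" using assms by (auto simp: A_V_def)
    then have "S \<subseteq> {a. valid_ix p q N a}" by (simp add: valid_mono_def)
    then have "finite S" using finite_valid_ix finite_subset by blast
    then show False using inf by simp
  qed
qed

theorem mainTheorem8:
  fixes p q N l :: nat and f :: fock
  assumes "1 \<le> p" and "1 \<le> q" and "1 \<le> N" and "1 \<le> l"
    and "f \<in> V_lambda p q N"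
  shows "casimir_op p q N l f = (\<lambda>_. 0)"
proof -
  have "f \<in> A_V p q N" using assms(5) by (simp add: V_lambda_def)
  then have "finite_wedge_supp f" by (rule finite_wedge_supp_of_A_V)
  moreover have "glN_annihilates p (p + q) N f" using assms(5) by (rule glN_annihilates_of_invariant)
  ultimately show ?thesis using assms(4) by (rule casimir_op_vanishes)
qed

end
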